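(* Let $C=(C_n,d_n)_{n\in\mathbb{Z}}$ be a free chain complex of $\mathbb{Z}$-modules with distinguished $\mathbb{Z}$-bases $\beta_n\subset C_n$, equipped with a finite filtration $0=C^0\subseteq C^1\subseteq\cdots\subseteq C^m=C$ by sub-chain complexes, each $C^i_n$ being the submodule spanned by $\beta_n\cap C^i_n$. Let $V=\{(\sigma_i;\tau_i)\}_{i\in I}$ be an admissible discrete vector field on $C$ such that for every $i\in I$ the cells $\sigma_i$ and $\tau_i$ have the same filtration index. Then the canonical vector-field reduction $\rho=(f,g,h):(C_n,d_n)\Rightarrow(C^c_n,d'_n)$ is compatible with the filtration: the differential $d'$ preserves the filtration $C^{c,i}_n=\mathbb{Z}[\beta^c_n\cap C^i_n]$ of the critical complex (so $C^c$ is a filtered chain complex), $f$ and $g$ are filtered chain complex morphisms ($f(C^i_n)\subseteq C^{c,i}_n$, $g(C^{c,i}_n)\subseteq C^i_n$), and $h(C^i_n)\subseteq C^i_{n+1}$ for all $n,i$, i.e. the homotopy $h$ has order $\leq 0$.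
   Context: A reduction $\rho=(f,g,h):D\Rightarrow C'$ between chain complexes consists of chain morphisms $f:D\to C'$, $g:C'\to D$ and a degree $+1$ homomorphism $h:D\to D$ with $fg=\mathrm{id}$, $gf+dh+hd=\mathrm{id}_D$, $fh=0$, $hg=0$, $hh=0$. A generator $\sigma\in\beta_n$ has filtration index $i$ if $\sigma\in C^i_n$ and $\sigma\notin C^{i-1}_n$. A discrete vector field (DVF) on $C$ is a set $V=\{(\sigma_i;\tau_i)\}_{i\in I}$ with $\sigma_i\in\beta_n$, $\tau_i\in\beta_{n+1}$ for some $n$ (depending on $i$), the coefficient of $\sigma_i$ in $d\tau_i$ equal to $\pm1$, and each basis element appearing at most once in $V$. Cells not appearing in $V$ are critical. A $V$-path of degree $n$ and length $m$ is a sequence $\{(\sigma_{i_k};\tau_{i_k})\}_{0\le k<m}$ of elements of $V$ with each $\tau_{i_k}$ an $n$-cell and, for $0<k<m$, $\sigma_{i_k}$ a face (nonzero coefficient in $d\tau_{i_{k-1}}$) of $\tau_{i_{k-1}}$ different from $\sigma_{i_{k-1}}$; it starts from $\sigma_{i_0}$. $V$ is admissible if for each $n$ there is a function $\lambda_n:\beta_n\to\mathbb{N}$ such that every $V$-path starting from $\sigma\in\beta_n$ has length at most $\lambda_n(\sigma)$. Canonical reduction: $V$ splits each $\beta_n=\beta^t_n\sqcup\beta^s_n\sqcup\beta^c_n$ into target cells (the $\tau_i$), source cells (the $\sigma_i$) and critical cells, hence $C_n=C^t_n\oplus C^s_n\oplus C^c_n$, and $d_n$ is written as a $3\times3$ block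 matrix $(d_{n,a,b})$ with respect to these decompositions (index $1=t$, $2=s$, $3=c$). For admissible $V$, $d_{n,2,1}:C^t_n\to C^s_{n-1}$ is an isomorphism. Then $C^c_n=\mathbb{Z}[\beta^c_n]$ and $d'_n=d_{n,3,3}-d_{n,3,1}d_{n,2,1}^{-1}d_{n,2,3}$, $f_n=[\,0\;\; -d_{n,3,1}d_{n,2,1}^{-1}\;\;1\,]$, $g_n=[\,-d_{n,2,1}^{-1}d_{n,2,3};\;0;\;1\,]^T$ (column), and $h_n$ is the block matrix whose only nonzero block is $d_{n,2,1}^{-1}$ in position $(1,2)$, i.e. $h$ sends $C^s_{n}$ to $C^t_{n+1}$ via $d_{n+1,2,1}^{-1}$ and is zero on $C^t_n\oplus C^c_n$. This $\rho$ is a reduction. *)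

theory Defs
  imports Main
begin

text \<open>Cells of the distinguished bases are the elements of a type 'a; each cell
has a degree (dim). Chains are finitely supported functions 'a => int
(coefficient of each basis cell). The differential is given by incidence
numbers: inc tau sigma = coefficient of sigma in d(tau).\<close>

definition csupp :: "('a \<Rightarrow> int) \<Rightarrow> 'a set" where
  "csupp c = {x. c x \<noteq> 0}"

definition lin :: "('a \<Rightarrow> 'b \<Rightarrow> int) \<Rightarrow> ('a \<Rightarrow> int) \<Rightarrow> 'b \<Rightarrow> int" where
  "lin F c = (\<lambda>y. \<Sum>x\<in>csupp c. c x * F x y)"

definition bd :: "('a \<Rightarrow> 'a \<Rightarrow> int) \<Rightarrow> ('a \<Rightarrow> int) \<Rightarrow> 'a \<Rightarrow> int" where
  "bd inc = lin inc"

definition proj :: "'a set \<Rightarrow> ('a \<Rightarrow> int) \<Rightarrow> 'a \<Rightarrow> int" where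
  "proj A c = (\<lambda>x. if x \<in> A then c x else 0)"

definition sgl :: "'a \<Rightarrow> 'a \<Rightarrow> int" where
  "sgl s = (\<lambda>x. if x = s then 1 else 0)"

definition free_chain_complex :: "('a \<Rightarrow> int) \<Rightarrow> ('a \<Rightarrow> 'a \<Rightarrow> int) \<Rightarrow> bool" where
  "free_chain_complex dim inc \<longleftrightarrow>
     (\<forall>t. finite {s. inc t s \<noteq> 0}) \<and>
     (\<forall>t s. inc t s \<noteq> 0 \<longrightarrow> dim s = dim t - 1) \<and>
     (\<forall>t r. (\<Sum>s\<in>{s. inc t s \<noteq> 0}. inc t s * inc s r) = 0)"

text \<open>Finite filtration 0 = C^0 <= C^1 <= ... <= C^m = C by sub-chain complexes,
C^i_n spanned by the basis cells in F i of degree n.\<close>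
definition filtration :: "('a \<Rightarrow> 'a \<Rightarrow> int) \<Rightarrow> (nat \<Rightarrow> 'a set) \<Rightarrow> nat \<Rightarrow> bool" where
  "filtration inc F m \<longleftrightarrow>
     F 0 = {} \<and> (\<forall>i<m. F i \<subseteq> F (Suc i)) \<and> F m = UNIV \<and>
     (\<forall>i\<le>m. \<forall>t\<in>F i. \<forall>s. inc t s \<noteq> 0 \<longrightarrow> s \<in> F i)"

definition filt_index :: "(nat \<Rightarrow> 'a set) \<Rightarrow> 'a \<Rightarrow> nat" where
  "filt_index F x = (LEAST i. x \<in> F i)"

definition DVF :: "('a \<Rightarrow> int) \<Rightarrow> ('a \<Rightarrow> 'a \<Rightarrow> int) \<Rightarrow> ('a \<times> 'a) set \<Rightarrow> bool" where
  "DVF dim inc V \<longleftrightarrow>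
     (\<forall>(s, t)\<in>V. dim t = dim s + 1 \<and> (inc t s = 1 \<or> inc t s = -1)) \<and>
     (\<forall>(s, t)\<in>V. \<forall>(s', t')\<in>V.
        (s = s' \<or> t = t' \<or> s = t' \<or> t = s') \<longrightarrow> (s, t) = (s', t'))"

definition V_path :: "('a \<Rightarrow> 'a \<Rightarrow> int) \<Rightarrow> ('a \<times> 'a) set \<Rightarrow> ('a \<times> 'a) list \<Rightarrow> bool" where
  "V_path inc V ps \<longleftrightarrow> set ps \<subseteq> V \<and>
     (\<forall>k. 0 < k \<and> k < length ps \<longrightarrow>
        inc (snd (ps ! (k - 1))) (fst (ps ! k)) \<noteq> 0 \<and> fst (ps ! k) \<noteq> fst (ps ! (k - 1)))"

definition admissible :: "('a \<Rightarrow> int) \<Rightarrow> ('a \<Rightarrow> 'a \<Rightarrow> int) \<Rightarrow> ('a \<times> 'a) set \<Rightarrow> bool" where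
  "admissible dim inc V \<longleftrightarrow>
     (\<exists>lam :: int \<Rightarrow> 'a \<Rightarrow> nat. \<forall>n s ps.
        dim s = n \<longrightarrow> V_path inc V ps \<longrightarrow> ps \<noteq> [] \<longrightarrow> fst (hd ps) = s \<longrightarrow>
        length ps \<le> lam n s)"

definition sources :: "('a \<times> 'a) set \<Rightarrow> 'a set" where "sources V = fst ` V"
definition targets :: "('a \<times> 'a) set \<Rightarrow> 'a set" where "targets V = snd ` V"
definition critical :: "('a \<times> 'a) set \<Rightarrow> 'a set" where
  "critical V = - (sources V \<union> targets V)"

text \<open>d_{2,1}^{-1} on a source cell: the unique chain in C^t whose boundary has
source-component exactly that cell; extended linearly.\<close>
definition psi :: "('a \<Rightarrow> 'a \<Rightarrow> int) \<Rightarrow> ('a \<times> 'a) set \<Rightarrow> 'a \<Rightarrow> 'a \<Rightarrow> int" where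
  "psi inc V s = (THE c. finite (csupp c) \<and> csupp c \<subseteq> targets V \<and>
                         proj (sources V) (bd inc c) = sgl s)"

definition d21inv :: "('a \<Rightarrow> 'a \<Rightarrow> int) \<Rightarrow> ('a \<times> 'a) set \<Rightarrow> ('a \<Rightarrow> int) \<Rightarrow> 'a \<Rightarrow> int" where
  "d21inv inc V = lin (psi inc V)"

definition red_h :: "('a \<Rightarrow> 'a \<Rightarrow> int) \<Rightarrow> ('a \<times> 'a) set \<Rightarrow> ('a \<Rightarrow> int) \<Rightarrow> 'a \<Rightarrow> int" where
  "red_h inc V c = d21inv inc V (proj (sources V) c)"

definition red_f :: "('a \<Rightarrow> 'a \<Rightarrow> int) \<Rightarrow> ('a \<times> 'a) set \<Rightarrow> ('a \<Rightarrow> int) \<Rightarrow> 'a \<Rightarrow> int" where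
  "red_f inc V c = (\<lambda>x. proj (critical V) c x
                        - proj (critical V) (bd inc (d21inv inc V (proj (sources V) c))) x)"

definition red_g :: "('a \<Rightarrow> 'a \<Rightarrow> int) \<Rightarrow> ('a \<times> 'a) set \<Rightarrow> ('a \<Rightarrow> int) \<Rightarrow> 'a \<Rightarrow> int" where
  "red_g inc V c = (\<lambda>x. c x - d21inv inc V (proj (sources V) (bd inc c)) x)"

definition red_d :: "('a \<Rightarrow> 'a \<Rightarrow> int) \<Rightarrow> ('a \<times> 'a) set \<Rightarrow> ('a \<Rightarrow> int) \<Rightarrow> 'a \<Rightarrow> int" where
  "red_d inc V c = (\<lambda>x. proj (critical V) (bd inc c) x
       - proj (critical V) (bd inc (d21inv inc V (proj (sources V) (bd inc c)))) x)"

end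

theory Submission
  imports Defs
begin

text \<open>Write \<open>d\<^sub>2\<^sub>1\<close> for the component of the differential from target to source cells.
The column of \<open>d\<^sub>2\<^sub>1\<^sup>-\<^sup>1\<close> at a source cell \<open>s\<close> paired with \<open>t\<close> is built by
induction on the maximal length of a \<open>V\<close>-path from \<open>s\<close>: it is \<open>\<plusminus>t\<close> corrected by the
columns at the other source faces of \<open>t\<close>, from which strictly shorter paths start. So it
only involves \<open>t\<close> and cells reached from \<open>t\<close> by faces and pairing, and it is unique
because \<open>d\<^sub>2\<^sub>1\<close> is injective (look at the summand of maximal path length). Any set of cells
closed under faces and under \<open>s \<mapsto> t\<close> therefore spans a subcomplex preserved by
\<open>d\<^sub>2\<^sub>1\<^sup>-\<^sup>1\<close>, hence by \<open>f\<close>, \<open>g\<close>, \<open>h\<close> and \<open>d'\<close>; when \<open>\<sigma>\<close> and \<open>\<tau>\<close> always have the same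
filtration index, every filtration level is such a set.\<close>

definition chains_on :: "'a set \<Rightarrow> ('a \<Rightarrow> int) set" where
  "chains_on B = {c. finite (csupp c) \<and> csupp c \<subseteq> B}"

lemma chains_on_mono: "B \<subseteq> B' \<Longrightarrow> chains_on B \<subseteq> chains_on B'"
  by (auto simp: chains_on_def)

lemma lin_eq_sum_superset:
  assumes "finite S" "csupp c \<subseteq> S"
  shows "lin G c y = (\<Sum>x\<in>S. c x * G x y)"
  unfolding lin_def
  by (rule sum.mono_neutral_left) (use assms in \<open>auto simp: csupp_def\<close>)

lemma csupp_lin_subset: "csupp (lin G c) \<subseteq> (\<Union>x\<in>csupp c. csupp (G x))"
  by (force simp: csupp_def lin_def intro: sum.neutral)

lemma lin_sum:
  assumes K: "finite K" and fin: "\<And>k. k \<in> K \<Longrightarrow> finite (csupp (c k))"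
  shows "lin G (\<lambda>x. \<Sum>k\<in>K. a k * c k x) y = (\<Sum>k\<in>K. a k * lin G (c k) y)"
proof -
  define S where "S = (\<Union>k\<in>K. csupp (c k))"
  have S: "finite S" using K fin by (simp add: S_def)
  have "csupp (\<lambda>x. \<Sum>k\<in>K. a k * c k x) \<subseteq> S"
    by (force simp: S_def csupp_def intro: sum.neutral)
  then have "lin G (\<lambda>x. \<Sum>k\<in>K. a k * c k x) y = (\<Sum>x\<in>S. (\<Sum>k\<in>K. a k * c k x) * G x y)"
    by (rule lin_eq_sum_superset[OF S])
  also have "\<dots> = (\<Sum>k\<in>K. a k * (\<Sum>x\<in>S. c k x * G x y))"
    by (simp add: sum_distrib_right sum_distrib_left mult.assoc sum.swap[of _ S])
  also have "\<dots> = (\<Sum>k\<in>K. a k * lin G (c k) y)"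
    by (rule sum.cong[OF refl], subst lin_eq_sum_superset[OF S]) (auto simp: S_def)
  finally show ?thesis .
qed

lemma lin_diff:
  assumes "finite (csupp c1)" "finite (csupp c2)"
  shows "lin G (\<lambda>x. c1 x - c2 x) y = lin G c1 y - lin G c2 y"
proof -
  define S where "S = csupp c1 \<union> csupp c2"
  have S: "finite S" using assms by (simp add: S_def)
  have "lin G (\<lambda>x. c1 x - c2 x) y = (\<Sum>x\<in>S. (c1 x - c2 x) * G x y)"
    by (rule lin_eq_sum_superset[OF S]) (auto simp: S_def csupp_def)
  also have "\<dots> = (\<Sum>x\<in>S. c1 x * G x y) - (\<Sum>x\<in>S. c2 x * G x y)"
    by (simp add: left_diff_distrib sum_subtractf)
  also have "\<dots> = lin G c1 y - lin G c2 y"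
    by (simp add: lin_eq_sum_superset[OF S] S_def)
  finally show ?thesis .
qed

lemma csupp_sgl [simp]: "csupp (sgl t) = {t}"
  by (auto simp: csupp_def sgl_def)

lemma lin_sgl [simp]: "lin G (sgl t) = G t"
  unfolding lin_def csupp_sgl by (simp add: sgl_def)

lemma lin_chains_on:
  assumes "c \<in> chains_on A" "\<And>x. x \<in> A \<Longrightarrow> G x \<in> chains_on B"
  shows "lin G c \<in> chains_on B"
proof -
  have "finite (\<Union>x\<in>csupp c. csupp (G x))" "(\<Union>x\<in>csupp c. csupp (G x)) \<subseteq> B"
    using assms by (auto simp: chains_on_def)
  with csupp_lin_subset[of G c] show ?thesis
    by (auto simp: chains_on_def intro: finite_subset)
qed

lemma proj_chains_on: "c \<in> chains_on B \<Longrightarrow> proj S c \<in> chains_on (B \<inter> S)"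
  unfolding chains_on_def
  by (auto simp: csupp_def proj_def elim!: rev_finite_subset)

lemma diff_chains_on:
  assumes "a \<in> chains_on B" "b \<in> chains_on B"
  shows "(\<lambda>x. a x - b x) \<in> chains_on B"
proof -
  have "csupp (\<lambda>x. a x - b x) \<subseteq> csupp a \<union> csupp b"
    by (auto simp: csupp_def)
  with assms show ?thesis
    by (auto simp: chains_on_def intro: finite_subset)
qed

lemma proj_diff_chains_on:
  assumes "a \<in> chains_on B" "b \<in> chains_on B"
  shows "(\<lambda>x. proj S a x - proj S b x) \<in> chains_on (B \<inter> S)"
proof -
  have "(\<lambda>x. proj S a x - proj S b x) = proj S (\<lambda>x. a x - b x)"
    by (simp add: proj_def fun_eq_iff)
  then show ?thesis using proj_chains_on[OF diff_chains_on[OF assms]] by simp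
qed

definition face_pair_closed :: "('a \<Rightarrow> 'a \<Rightarrow> int) \<Rightarrow> ('a \<times> 'a) set \<Rightarrow> 'a set \<Rightarrow> bool" where
  "face_pair_closed inc V A \<longleftrightarrow>
     (\<forall>t\<in>A. \<forall>s. inc t s \<noteq> 0 \<longrightarrow> s \<in> A) \<and> (\<forall>(s, t)\<in>V. s \<in> A \<longrightarrow> t \<in> A)"

lemma V_path_Cons:
  assumes "(s, t) \<in> V" "V_path inc V ps" "ps \<noteq> []"
    and "inc t (fst (hd ps)) \<noteq> 0" "fst (hd ps) \<noteq> s"
  shows "V_path inc V ((s, t) # ps)"
proof -
  have "inc (snd (((s, t) # ps) ! (k - 1))) (fst (((s, t) # ps) ! k)) \<noteq> 0 \<and>
        fst (((s, t) # ps) ! k) \<noteq> fst (((s, t) # ps) ! (k - 1))"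
    if k: "0 < k" "k < length ((s, t) # ps)" for k
  proof (cases "k = 1")
    case True
    then show ?thesis using assms(3-5) by (simp add: hd_conv_nth)
  next
    case False
    with k obtain j where "k = Suc j" "0 < j" "j < length ps"
      by (cases k) auto
    with assms(2) show ?thesis by (cases j) (auto simp: V_path_def)
  qed
  with assms(1,2) show ?thesis by (auto simp: V_path_def)
qed

locale admissible_vector_field =
  fixes dim :: "'a \<Rightarrow> int" and inc :: "'a \<Rightarrow> 'a \<Rightarrow> int" and V :: "('a \<times> 'a) set"
  assumes chain_complex: "free_chain_complex dim inc"
    and vector_field: "DVF dim inc V"
    and admissible: "admissible dim inc V"
begin

lemma finite_faces: "finite {s. inc t s \<noteq> 0}"
  using chain_complex unfolding free_chain_complex_def by blast

lemma dim_face: "inc t s \<noteq> 0 \<Longrightarrow> dim s = dim t - 1"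
  using chain_complex unfolding free_chain_complex_def by blast

lemma pair_eqI: "(s, t) \<in> V \<Longrightarrow> (s', t') \<in> V \<Longrightarrow> s = s' \<or> t = t' \<Longrightarrow> s = s' \<and> t = t'"
  using vector_field unfolding DVF_def by fastforce

lemma pair_inc_unit: "(s, t) \<in> V \<Longrightarrow> inc t s * inc t s = 1"
  using vector_field unfolding DVF_def by fastforce

lemma pair_dim: "(s, t) \<in> V \<Longrightarrow> dim t = dim s + 1"
  using vector_field unfolding DVF_def by fastforce

definition paths_from :: "'a \<Rightarrow> ('a \<times> 'a) list set" where
  "paths_from s = {ps. V_path inc V ps \<and> ps \<noteq> [] \<and> fst (hd ps) = s}"

definition max_path_len :: "'a \<Rightarrow> nat" where
  "max_path_len s = Max (length ` paths_from s)"

lemma finite_path_lengths: "finite (length ` paths_from s)"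
proof -
  obtain lam :: "int \<Rightarrow> 'a \<Rightarrow> nat" where "\<And>ps. ps \<in> paths_from s \<Longrightarrow> length ps \<le> lam (dim s) s"
    using admissible unfolding admissible_def paths_from_def by blast
  then have "length ` paths_from s \<subseteq> {..lam (dim s) s}" by auto
  then show ?thesis by (rule finite_subset) simp
qed

lemma max_path_len_face_less:
  assumes st: "(s, t) \<in> V" and st': "(s', t') \<in> V" and "inc t s' \<noteq> 0" "s' \<noteq> s"
  shows "max_path_len s' < max_path_len s"
proof -
  have "[(s', t')] \<in> paths_from s'" using st' by (auto simp: paths_from_def V_path_def)
  then have "max_path_len s' \<in> length ` paths_from s'"
    unfolding max_path_len_def using finite_path_lengths by (intro Max_in) auto
  then obtain ps where ps: "ps \<in> paths_from s'" "length ps = max_path_len s'" by auto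
  then have "(s, t) # ps \<in> paths_from s"
    using assms V_path_Cons[OF st] by (auto simp: paths_from_def)
  then have "length ((s, t) # ps) \<le> max_path_len s"
    unfolding max_path_len_def by (rule Max_ge[OF finite_path_lengths imageI])
  with ps show ?thesis by simp
qed

definition is_column :: "'a \<Rightarrow> ('a \<Rightarrow> int) \<Rightarrow> bool" where
  "is_column s c \<longleftrightarrow>
     finite (csupp c) \<and> csupp c \<subseteq> targets V \<and> proj (sources V) (bd inc c) = sgl s"

lemma column_from_face_columns:
  assumes st: "(s, t) \<in> V"
    and K_def: "K = {k \<in> sources V. inc t k \<noteq> 0 \<and> k \<noteq> s}"
    and C: "\<And>k. k \<in> K \<Longrightarrow> is_column k (C k)"
  shows "\<exists>c. is_column s c \<and> csupp c \<subseteq> insert t (\<Union>k\<in>K. csupp (C k))"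
proof -
  define e where "e = inc t s"
  have e: "e * e = 1" using pair_inc_unit[OF st] by (simp add: e_def)
  have K: "finite K" "s \<notin> K"
    using finite_subset[OF _ finite_faces[of t]] by (auto simp: K_def)
  \<comment> \<open>\<open>c = e \<cdot> (t - (\<Sum>k\<in>K. inc t k \<cdot> C k))\<close>, written as one sum over \<open>insert s K\<close>\<close>
  define a where "a k = (if k = s then e else - e * inc t k)" for k
  define D where "D k = (if k = s then sgl t else C k)" for k
  define c where "c x = (\<Sum>k\<in>insert s K. a k * D k x)" for x
  have finD: "finite (csupp (D k))" if "k \<in> insert s K" for k
    using C that by (auto simp: D_def is_column_def)
  have supp: "csupp c \<subseteq> insert t (\<Union>k\<in>K. csupp (C k))"
    using K(2) by (force simp: c_def csupp_def D_def sgl_def intro: sum.neutral)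
  have "finite (csupp c)"
    using K(1) C by (intro finite_subset[OF supp]) (auto simp: is_column_def)
  moreover have "csupp c \<subseteq> targets V"
    using supp C st by (force simp: is_column_def targets_def)
  moreover have "proj (sources V) (bd inc c) = sgl s"
  proof
    fix y
    have "bd inc c y = (\<Sum>k\<in>insert s K. a k * bd inc (D k) y)"
      unfolding bd_def c_def using K(1) finD by (intro lin_sum) auto
    also have "\<dots> = e * inc t y + (\<Sum>k\<in>K. - e * inc t k * bd inc (C k) y)"
      using K by (auto simp: a_def D_def bd_def intro!: sum.cong)
    finally have bd_c: "bd inc c y = e * inc t y - e * (\<Sum>k\<in>K. inc t k * bd inc (C k) y)"
      by (simp add: sum_distrib_left sum_negf mult.assoc)
    show "proj (sources V) (bd inc c) y = sgl s y"
    proof (cases "y \<in> sources V")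
      case True
      then have "bd inc (C k) y = sgl k y" if "k \<in> K" for k
        using C[OF that] True unfolding is_column_def by (auto simp: proj_def dest: fun_cong[of _ _ y])
      then have "(\<Sum>k\<in>K. inc t k * bd inc (C k) y) = (if y \<in> K then inc t y else 0)"
        using K(1) by (simp add: sgl_def if_distrib[of "\<lambda>z. _ * z"] cong: if_cong)
      with True bd_c have "proj (sources V) (bd inc c) y = (if y \<in> K then 0 else e * inc t y)"
        by (simp add: proj_def)
      also have "\<dots> = sgl s y"
        using True e K(2) unfolding K_def sgl_def e_def by auto
      finally show ?thesis .
    next
      case False
      then show ?thesis using st by (force simp: proj_def sgl_def sources_def)
    qed
  qed
  ultimately show ?thesis using supp unfolding is_column_def by (intro exI[of _ c]) simp
qed

definition supported_column :: "'a \<Rightarrow> ('a \<Rightarrow> int) \<Rightarrow> bool" where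
  "supported_column s c \<longleftrightarrow> is_column s c \<and> (\<forall>x\<in>csupp c. dim x = dim s + 1) \<and>
     (\<forall>A. face_pair_closed inc V A \<and> s \<in> A \<longrightarrow> csupp c \<subseteq> A)"

lemma supported_column_exists: "(s, t) \<in> V \<Longrightarrow> \<exists>c. supported_column s c"
proof (induction "max_path_len s" arbitrary: s t rule: less_induct)
  case less
  note st = less.prems
  define K where "K = {k \<in> sources V. inc t k \<noteq> 0 \<and> k \<noteq> s}"
  have "\<exists>c. supported_column k c" if "k \<in> K" for k
  proof -
    from that obtain tk where tk: "(k, tk) \<in> V" by (auto simp: K_def sources_def)
    with that st have "max_path_len k < max_path_len s"
      by (intro max_path_len_face_less) (auto simp: K_def)
    then show ?thesis using tk by (rule less.hyps)
  qed
  then obtain C where C: "\<And>k. k \<in> K \<Longrightarrow> supported_column k (C k)" by metis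
  then have "\<And>k. k \<in> K \<Longrightarrow> is_column k (C k)" by (simp add: supported_column_def)
  from column_from_face_columns[OF st K_def this]
  obtain c where c: "is_column s c" and supp: "csupp c \<subseteq> insert t (\<Union>k\<in>K. csupp (C k))"
    by blast
  have "dim x = dim s + 1" if x: "x \<in> csupp c" for x
  proof (cases "x = t")
    case True
    then show ?thesis using pair_dim[OF st] by simp
  next
    case False
    with x supp obtain k where k: "k \<in> K" "x \<in> csupp (C k)" by blast
    then have "dim k = dim s" using dim_face[of t k] pair_dim[OF st] by (simp add: K_def)
    with C[OF k(1)] k(2) show ?thesis by (simp add: supported_column_def)
  qed
  moreover have "csupp c \<subseteq> A" if A: "face_pair_closed inc V A" "s \<in> A" for A
  proof -
    have t: "t \<in> A" using A st by (auto simp: face_pair_closed_def)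
    have "csupp (C k) \<subseteq> A" if "k \<in> K" for k
    proof -
      have "k \<in> A" using A(1) t that by (auto simp: face_pair_closed_def K_def)
      with A(1) C[OF that] show ?thesis by (simp add: supported_column_def)
    qed
    with t supp show ?thesis by blast
  qed
  ultimately show ?case using c unfolding supported_column_def by blast
qed

lemma target_chain_eq_zero:
  assumes fin: "finite (csupp c)" and tg: "csupp c \<subseteq> targets V"
    and vanish: "\<And>y. y \<in> sources V \<Longrightarrow> bd inc c y = 0"
  shows "c = (\<lambda>_. 0)"
proof (rule ccontr)
  assume "c \<noteq> (\<lambda>_. 0)"
  then have ne: "csupp c \<noteq> {}" by (auto simp: csupp_def)
  define src where "src x = (SOME s. (s, x) \<in> V)" for x
  have src: "(src x, x) \<in> V" if "x \<in> csupp c" for x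
  proof -
    from that tg obtain s where "(s, x) \<in> V" by (auto simp: targets_def)
    then show ?thesis unfolding src_def by (rule someI)
  qed
  \<comment> \<open>take the summand whose source starts the longest \<open>V\<close>-path\<close>
  define M where "M = Max ((\<lambda>x. max_path_len (src x)) ` csupp c)"
  have "M \<in> (\<lambda>x. max_path_len (src x)) ` csupp c"
    unfolding M_def using fin ne by (intro Max_in) auto
  then obtain t0 where t0: "t0 \<in> csupp c" and M: "max_path_len (src t0) = M" by auto
  have max: "max_path_len (src x) \<le> M" if "x \<in> csupp c" for x
    unfolding M_def using fin that by (intro Max_ge) auto
  define s0 where "s0 = src t0"
  have st0: "(s0, t0) \<in> V" using src[OF t0] by (simp add: s0_def)
  have others: "inc x s0 = 0" if "x \<in> csupp c" "x \<noteq> t0" for x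
  proof (rule ccontr)
    assume "inc x s0 \<noteq> 0"
    moreover have "s0 \<noteq> src x" using pair_eqI[OF st0 src[OF that(1)]] that(2) by blast
    ultimately have "max_path_len s0 < max_path_len (src x)"
      using max_path_len_face_less[OF src[OF that(1)] st0] by blast
    with max[OF that(1)] M show False by (simp add: s0_def)
  qed
  have "bd inc c s0 = (\<Sum>x\<in>csupp c. c x * inc x s0)" by (simp add: bd_def lin_def)
  also have "\<dots> = c t0 * inc t0 s0"
    using fin t0 others by (simp add: sum.remove[OF fin t0] sum.neutral)
  finally have "bd inc c s0 = c t0 * inc t0 s0" .
  moreover have "c t0 \<noteq> 0" using t0 by (simp add: csupp_def)
  moreover have "inc t0 s0 \<noteq> 0" using pair_inc_unit[OF st0] by auto
  moreover have "s0 \<in> sources V" using st0 by (force simp: sources_def)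
  ultimately show False using vanish by simp
qed

lemma psi_supported_column:
  assumes "(s, t) \<in> V"
  shows "supported_column s (psi inc V s)"
proof -
  obtain c where c: "supported_column s c"
    using supported_column_exists[OF assms] by blast
  then have col: "is_column s c" by (simp add: supported_column_def)
  have unique: "c' = c" if c': "is_column s c'" for c'
  proof -
    have "(\<lambda>x. c' x - c x) = (\<lambda>_. 0)"
    proof (rule target_chain_eq_zero)
      show "finite (csupp (\<lambda>x. c' x - c x))" "csupp (\<lambda>x. c' x - c x) \<subseteq> targets V"
        using diff_chains_on[of c' "targets V" c] col c' by (auto simp: chains_on_def is_column_def)
    next
      fix y assume "y \<in> sources V"
      then have "bd inc c' y = bd inc c y"
        using col c' unfolding is_column_def by (auto simp: proj_def dest!: fun_cong[of _ _ y])
      then show "bd inc (\<lambda>x. c' x - c x) y = 0"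
        using col c' by (simp add: bd_def lin_diff is_column_def)
    qed
    then show ?thesis by (simp add: fun_eq_iff)
  qed
  have "psi inc V s = c"
    unfolding psi_def
  proof (rule the_equality)
    show "finite (csupp c) \<and> csupp c \<subseteq> targets V \<and> proj (sources V) (bd inc c) = sgl s"
      using col by (simp add: is_column_def)
  qed (rule unique, simp add: is_column_def)
  with c show ?thesis by simp
qed

lemma bd_chains_on:
  assumes "face_pair_closed inc V A" "c \<in> chains_on {x \<in> A. dim x = n}"
  shows "bd inc c \<in> chains_on {x \<in> A. dim x = n - 1}"
  unfolding bd_def
proof (rule lin_chains_on[OF assms(2)])
  fix x assume "x \<in> {x \<in> A. dim x = n}"
  then show "inc x \<in> chains_on {x \<in> A. dim x = n - 1}"
    using assms(1) finite_faces[of x] dim_face[of x]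
    by (auto simp: chains_on_def csupp_def face_pair_closed_def)
qed

lemma d21inv_chains_on:
  assumes "face_pair_closed inc V A" "c \<in> chains_on {x \<in> A \<inter> sources V. dim x = n}"
  shows "d21inv inc V c \<in> chains_on {x \<in> A. dim x = n + 1}"
  unfolding d21inv_def
proof (rule lin_chains_on[OF assms(2)])
  fix s assume s: "s \<in> {x \<in> A \<inter> sources V. dim x = n}"
  then obtain t where "(s, t) \<in> V" by (auto simp: sources_def)
  from psi_supported_column[OF this] have "supported_column s (psi inc V s)" .
  with s assms(1) show "psi inc V s \<in> chains_on {x \<in> A. dim x = n + 1}"
    by (auto simp: chains_on_def supported_column_def is_column_def)
qed

lemma red_h_chains_on:
  assumes "face_pair_closed inc V A" "c \<in> chains_on {x \<in> A. dim x = n}"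
  shows "red_h inc V c \<in> chains_on {x \<in> A. dim x = n + 1}"
proof -
  have "proj (sources V) c \<in> chains_on ({x \<in> A. dim x = n} \<inter> sources V)"
    by (rule proj_chains_on[OF assms(2)])
  then have "proj (sources V) c \<in> chains_on {x \<in> A \<inter> sources V. dim x = n}"
    by (rule subsetD[OF chains_on_mono, rotated]) blast
  then show ?thesis unfolding red_h_def by (rule d21inv_chains_on[OF assms(1)])
qed

lemma red_f_chains_on:
  assumes "face_pair_closed inc V A" "c \<in> chains_on {x \<in> A. dim x = n}"
  shows "red_f inc V c \<in> chains_on {x \<in> A \<inter> critical V. dim x = n}"
proof -
  have "bd inc (red_h inc V c) \<in> chains_on {x \<in> A. dim x = n}"
    using bd_chains_on[OF assms(1) red_h_chains_on[OF assms]] by simp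
  from proj_diff_chains_on[OF assms(2) this, of "critical V"] show ?thesis
    unfolding red_f_def red_h_def[symmetric] by (rule subsetD[OF chains_on_mono, rotated]) blast
qed

lemma red_g_chains_on:
  assumes "face_pair_closed inc V A" "c \<in> chains_on {x \<in> A. dim x = n}"
  shows "red_g inc V c \<in> chains_on {x \<in> A. dim x = n}"
proof -
  have "red_h inc V (bd inc c) \<in> chains_on {x \<in> A. dim x = n}"
    using red_h_chains_on[OF assms(1) bd_chains_on[OF assms]] by simp
  from diff_chains_on[OF assms(2) this] show ?thesis
    unfolding red_g_def red_h_def .
qed

lemma red_d_chains_on:
  assumes "face_pair_closed inc V A" "c \<in> chains_on {x \<in> A. dim x = n}"
  shows "red_d inc V c \<in> chains_on {x \<in> A \<inter> critical V. dim x = n - 1}"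
proof -
  have "bd inc c \<in> chains_on {x \<in> A. dim x = n - 1}"
    using bd_chains_on[OF assms] .
  then have "red_f inc V (bd inc c) \<in> chains_on {x \<in> A \<inter> critical V. dim x = n - 1}"
    by (rule red_f_chains_on[OF assms(1)])
  then show ?thesis
    by (simp add: red_d_def red_f_def)
qed

end

lemma filtration_level_face_pair_closed:
  assumes filt: "filtration inc F m" and i: "i \<le> m"
    and same_index: "\<forall>(s, t)\<in>V. filt_index F s = filt_index F t"
  shows "face_pair_closed inc V (F i)"
proof -
  have mono: "F j \<subseteq> F k" if "j \<le> k" "k \<le> m" for j k
    using that
  proof (induction k rule: dec_induct)
    case (step k)
    then have "F k \<subseteq> F (Suc k)" using filt by (simp add: filtration_def)
    with step show ?case by simp
  qed simp
  have "t \<in> F i" if st: "(s, t) \<in> V" and s: "s \<in> F i" for s t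
  proof -
    have "t \<in> F (filt_index F t)"
      unfolding filt_index_def by (rule LeastI[of _ m]) (use filt in \<open>simp add: filtration_def\<close>)
    moreover have "filt_index F t = filt_index F s" using same_index st by auto
    moreover have "filt_index F s \<le> i" unfolding filt_index_def by (rule Least_le) (rule s)
    ultimately show ?thesis using mono[of "filt_index F s" i] i by auto
  qed
  with filt i show ?thesis by (auto simp: face_pair_closed_def filtration_def)
qed

theorem theorem3:
  fixes dim :: "'a \<Rightarrow> int" and inc :: "'a \<Rightarrow> 'a \<Rightarrow> int"
    and V :: "('a \<times> 'a) set" and F :: "nat \<Rightarrow> 'a set" and m :: nat
  assumes cc: "free_chain_complex dim inc"
    and filt: "filtration inc F m"
    and dvf: "DVF dim inc V"
    and adm: "admissible dim inc V"
    and same_index: "\<forall>(s, t)\<in>V. filt_index F s = filt_index F t"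
  shows "\<forall>i\<le>m. \<forall>n::int. \<forall>c.
     (finite (csupp c) \<and> csupp c \<subseteq> {x \<in> F i \<inter> critical V. dim x = n} \<longrightarrow>
        csupp (red_d inc V c) \<subseteq> {x \<in> F i \<inter> critical V. dim x = n - 1}) \<and>
     (finite (csupp c) \<and> csupp c \<subseteq> {x \<in> F i. dim x = n} \<longrightarrow>
        csupp (red_f inc V c) \<subseteq> {x \<in> F i \<inter> critical V. dim x = n}) \<and>
     (finite (csupp c) \<and> csupp c \<subseteq> {x \<in> F i \<inter> critical V. dim x = n} \<longrightarrow>
        csupp (red_g inc V c) \<subseteq> {x \<in> F i. dim x = n}) \<and>
     (finite (csupp c) \<and> csupp c \<subseteq> {x \<in> F i. dim x = n} \<longrightarrow>
        csupp (red_h inc V c) \<subseteq> {x \<in> F i. dim x = n + 1})"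
proof -
  interpret admissible_vector_field dim inc V
    using cc dvf adm by unfold_locales
  have closed: "face_pair_closed inc V (F i)" if "i \<le> m" for i
    using filtration_level_face_pair_closed[OF filt that same_index] .
  have critical_chains: "c \<in> chains_on {x \<in> A. dim x = n}"
    if "c \<in> chains_on {x \<in> A \<inter> critical V. dim x = n}" for c A n
    using that by (rule subsetD[OF chains_on_mono, rotated]) blast
  show ?thesis
    using red_d_chains_on[OF closed critical_chains] red_f_chains_on[OF closed]
      red_g_chains_on[OF closed critical_chains] red_h_chains_on[OF closed]
    by (simp add: chains_on_def)
qed

end
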